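(* For every integer $n\ge5$ there exists a prismatic cube $\Pi_{4,3}^n$ in hyperbolic space $\mathbb{H}^3$.
   Context: Let $P_{4,3}^n$ be the regular (possibly ideal or hyperideal) hyperbolic cube centered at a point $O$ whose dihedral angle is $2\pi/n$, and let $\Gamma_{4,3}^n$ be the discrete group generated by the hyperbolic reflections in the planes of the faces of $P_{4,3}^n$ (it has $P_{4,3}^n$ as a fundamental domain). A prismatic cube $\Pi_{4,3}^n$ is obtained as follows: one chooses a smaller compact regular cube $Q$ centered at $O$, with the same symmetry axes as $P_{4,3}^n$ and lying inside it, such that for each face $F$ of $Q$, the face $F$ and its image $F'$ under reflection in the corresponding face of $P_{4,3}^n$ are the bottom and top of a prism whose four lateral faces are regular squares (all edges of equal length). $\Pi_{4,3}^n$ is the union of all images under $\Gamma_{4,3}^n$ of these lateral squares; it is an infinite polyhedral surface consisting of squares. Existence of $\Pi_{4,3}^n$ means existence of such a $Q$. *)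

theory Defs
  imports "HOL-Analysis.Analysis"
begin

text \<open>Hyperboloid model of hyperbolic 3-space inside Minkowski space R^{3,1}.
  Coordinate 1 is the time-like coordinate, coordinates 2,3,4 are space-like.\<close>

definition mink :: "real^4 \<Rightarrow> real^4 \<Rightarrow> real" where
  "mink x y = - x$1 * y$1 + x$2 * y$2 + x$3 * y$3 + x$4 * y$4"

definition hyp3 :: "(real^4) set" where
  "hyp3 = {x. mink x x = -1 \<and> x$1 > 0}"

definition hdist :: "real^4 \<Rightarrow> real^4 \<Rightarrow> real" where
  "hdist x y = arcosh (- mink x y)"

definition hO :: "real^4" where
  "hO = axis 1 1"

text \<open>A hyperbolic plane is described by a unit space-like normal e (mink e e = 1):
  it is the set of points x of hyp3 with mink x e = 0.
  The hyperbolic reflection in that plane:\<close>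
definition hrefl :: "real^4 \<Rightarrow> real^4 \<Rightarrow> real^4" where
  "hrefl e x = x - (2 * mink x e) *\<^sub>R e"

definition spacelike_unit :: "real^4 \<Rightarrow> bool" where
  "spacelike_unit e \<longleftrightarrow> mink e e = 1"

text \<open>Two planes with unit normals e1, e2 intersect in hyp3 iff abs (mink e1 e2) < 1;
  if e1, e2 are the outward normals of a convex polyhedron, the interior dihedral
  angle along the common line is arccos (- mink e1 e2).\<close>
definition planes_intersect :: "real^4 \<Rightarrow> real^4 \<Rightarrow> bool" where
  "planes_intersect e1 e2 \<longleftrightarrow> \<bar>mink e1 e2\<bar> < 1"

definition dihedral_angle :: "real^4 \<Rightarrow> real^4 \<Rightarrow> real" where
  "dihedral_angle e1 e2 = arccos (- mink e1 e2)"

text \<open>Regular cube centred at O whose symmetry axes are the coordinate axes 2,3,4: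
  its face planes are at hyperbolic distance a from O, perpendicular to the axis i,
  on the side s (s = 1 or s = -1).\<close>
definition face_normal :: "real \<Rightarrow> 4 \<Rightarrow> real \<Rightarrow> real^4" where
  "face_normal a i s = sinh a *\<^sub>R axis 1 1 + (s * cosh a) *\<^sub>R axis i 1"

definition face_index :: "(4 \<times> real) set" where
  "face_index = {2,3,4} \<times> {-1,1}"

text \<open>The (possibly ideal or hyperideal) cube P: intersection of the six half-spaces.\<close>
definition cube_P :: "real \<Rightarrow> (real^4) set" where
  "cube_P a = {x \<in> hyp3. \<forall>(i,s)\<in>face_index. mink x (face_normal a i s) \<le> 0}"

definition cube_dihedral :: "real \<Rightarrow> real \<Rightarrow> bool" where
  "cube_dihedral a theta \<longleftrightarrow>
     (\<forall>(i,s)\<in>face_index. \<forall>(j,t)\<in>face_index. i \<noteq> j \<longrightarrow>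
        planes_intersect (face_normal a i s) (face_normal a j t) \<and>
        dihedral_angle (face_normal a i s) (face_normal a j t) = theta)"

text \<open>Sign vectors labelling the 8 vertices of a cube (entries on coordinates 2,3,4).\<close>
definition signs :: "(4 \<Rightarrow> real) set" where
  "signs = {sg. \<forall>i\<in>{2,3,4}. sg i \<in> {-1,1}}"

text \<open>Vertex of the compact regular cube Q centred at O with the same symmetry axes,
  whose vertices are at hyperbolic distance r from O.\<close>
definition cube_vertex :: "real \<Rightarrow> (4 \<Rightarrow> real) \<Rightarrow> real^4" where
  "cube_vertex r sg = cosh r *\<^sub>R axis 1 1 +
     (sinh r / sqrt 3) *\<^sub>R (\<Sum>i\<in>{2,3,4}. sg i *\<^sub>R axis i 1)"

definition cube_adjacent :: "(4 \<Rightarrow> real) \<Rightarrow> (4 \<Rightarrow> real) \<Rightarrow> bool" where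
  "cube_adjacent sg tg \<longleftrightarrow> card {j\<in>{2,3,4}. sg j \<noteq> tg j} = 1"

text \<open>A regular square (in the sense of the paper: all edges of equal length) with
  consecutive vertices p, q, u, w: four distinct points of hyp3 lying in a common
  hyperbolic plane, all four edges of the same length.\<close>
definition regular_square :: "real^4 \<Rightarrow> real^4 \<Rightarrow> real^4 \<Rightarrow> real^4 \<Rightarrow> bool" where
  "regular_square p q u w \<longleftrightarrow>
     p \<in> hyp3 \<and> q \<in> hyp3 \<and> u \<in> hyp3 \<and> w \<in> hyp3 \<and>
     distinct [p, q, u, w] \<and>
     (\<exists>e. spacelike_unit e \<and> mink p e = 0 \<and> mink q e = 0 \<and> mink u e = 0 \<and> mink w e = 0) \<and>
     hdist p q = hdist q u \<and> hdist q u = hdist u w \<and> hdist u w = hdist w p"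

definition Q_inside_P :: "real \<Rightarrow> real \<Rightarrow> bool" where
  "Q_inside_P a r \<longleftrightarrow>
     (\<forall>sg\<in>signs. \<forall>(i,s)\<in>face_index. mink (cube_vertex r sg) (face_normal a i s) < 0)"

text \<open>Prism condition: for each face F of Q (the face lying towards face (i,s) of P,
  i.e. vertices with sg i = s) and its image F' under the reflection in the plane of
  face (i,s) of P, each lateral quadrilateral  v1, v2, refl v2, refl v1  (for an edge
  v1 v2 of F) is a regular square.\<close>
definition prism_condition :: "real \<Rightarrow> real \<Rightarrow> bool" where
  "prism_condition a r \<longleftrightarrow>
     (\<forall>(i,s)\<in>face_index. \<forall>sg\<in>signs. \<forall>tg\<in>signs.
        sg i = s \<longrightarrow> tg i = s \<longrightarrow> cube_adjacent sg tg \<longrightarrow>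
        regular_square (cube_vertex r sg) (cube_vertex r tg)
          (hrefl (face_normal a i s) (cube_vertex r tg))
          (hrefl (face_normal a i s) (cube_vertex r sg)))"

end

theory Submission
  imports Defs
begin

text \<open>Adjacent faces of P have unit normals with Minkowski product -(sinh a)^2, so P has
  dihedral angle 2 pi/n when (sinh a)^2 = cos (2 pi/n), which has a solution a > 0 precisely
  when n >= 5. Put t = sinh r / sqrt 3, so that adjacent vertices of Q are at distance
  arcosh (1 + 2 t^2). If tanh r = sqrt 3 sinh a / (1 + cosh a), which is solvable because
  sinh a < 1, every vertex v of the face of Q turned towards the face of P with normal e
  satisfies mink v e = -t. The reflection in that face then maps v to v + 2 t e, again at
  distance arcosh (1 + 2 t^2) from v, so all four edges of a lateral quadrilateral have the
  same length; and the quadrilateral lies in the plane through its edge of Q orthogonal to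
  the face of P.\<close>

lemma tanh_artanh_real:
  fixes x :: real
  assumes "\<bar>x\<bar> < 1"
  shows "tanh (artanh x) = x"
proof -
  have "artanh x = ln (sqrt ((1 + x) / (1 - x)))"
    using assms by (simp add: artanh_def ln_sqrt)
  then show ?thesis
    using assms by (simp add: tanh_ln_real field_simps)
qed

lemma mink_sym: "mink x y = mink y x"
  by (simp add: mink_def)

lemma mink_diff_left: "mink (x - y) z = mink x z - mink y z"
  by (simp add: mink_def algebra_simps)

lemma mink_diff_right: "mink x (y - z) = mink x y - mink x z"
  by (simp add: mink_def algebra_simps)

lemma mink_scaleR_left: "mink (c *\<^sub>R x) z = c * mink x z"
  by (simp add: mink_def algebra_simps)

lemma mink_scaleR_right: "mink x (c *\<^sub>R z) = c * mink x z"
  by (simp add: mink_def algebra_simps)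

lemma mink_eq_sum: "mink x y = - x$1 * y$1 + (\<Sum>l\<in>{2,3,4}. x$l * y$l)"
  by (simp add: mink_def)

lemma mink_hrefl_left: "mink (hrefl e x) y = mink x y - 2 * mink x e * mink e y"
  by (simp add: hrefl_def mink_diff_left mink_scaleR_left)

lemma mink_hrefl_hrefl:
  assumes "spacelike_unit e"
  shows "mink (hrefl e x) (hrefl e y) = mink x y"
  using assms
  by (simp add: mink_hrefl_left hrefl_def mink_diff_left mink_diff_right mink_scaleR_left
      mink_scaleR_right mink_sym[of y e] mink_sym[of x e] spacelike_unit_def algebra_simps)

lemma hrefl_hrefl:
  assumes "spacelike_unit e"
  shows "hrefl e (hrefl e x) = x"
  using assms by (simp add: hrefl_def mink_diff_left mink_scaleR_left spacelike_unit_def)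

lemma regular_square_reflected_edge:
  assumes e: "spacelike_unit e" "e$1 \<ge> 0"
    and pq: "p \<in> hyp3" "q \<in> hyp3" "p \<noteq> q" "mink p q = - (1 + 2 * t\<^sup>2)"
    and t: "t > 0" "mink p e = - t" "mink q e = - t"
    and f: "spacelike_unit f" "mink p f = 0" "mink q f = 0" "mink e f = 0"
  shows "regular_square p q (hrefl e q) (hrefl e p)"
proof -
  have ee: "mink e e = 1"
    using e(1) by (simp add: spacelike_unit_def)
  have refl_in_hyp3: "hrefl e x \<in> hyp3" if "x \<in> hyp3" "mink x e = - t" for x
  proof -
    have "(hrefl e x) $ 1 = x $ 1 + 2 * t * e $ 1"
      using that(2) by (simp add: hrefl_def)
    moreover have "x $ 1 > 0" using that(1) by (simp add: hyp3_def)
    ultimately show ?thesis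
      using that e t(1) mink_hrefl_hrefl[OF e(1), of x x]
      by (simp add: hyp3_def add_pos_nonneg)
  qed
  have refl_side: "mink (hrefl e x) e = t" if "mink x e = - t" for x
    using that ee by (simp add: mink_hrefl_left)
  have lateral: "mink x (hrefl e x) = - (1 + 2 * t\<^sup>2)" if "x \<in> hyp3" "mink x e = - t" for x
    using that
    by (simp add: mink_sym[of x "hrefl e x"] mink_hrefl_left mink_sym[of e x] hyp3_def power2_eq_square)
  have other_side: "x \<noteq> hrefl e y" if "mink x e = - t" "mink y e = - t" for x y
    using that refl_side[OF that(2)] t(1) by auto
  have "hrefl e q \<noteq> hrefl e p"
    using pq(3) hrefl_hrefl[OF e(1)] by metis
  then have "distinct [p, q, hrefl e q, hrefl e p]"
    using pq(3) other_side t(2,3) by auto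
  moreover have "mink (hrefl e x) f = 0" if "mink x f = 0" for x
    using that f(4) by (simp add: mink_hrefl_left)
  moreover have "hdist p q = hdist q (hrefl e q)" "hdist q (hrefl e q) = hdist (hrefl e q) (hrefl e p)"
      "hdist (hrefl e q) (hrefl e p) = hdist (hrefl e p) p"
    using pq t lateral[of p] lateral[of q] mink_hrefl_hrefl[OF e(1), of q p]
    by (simp_all add: hdist_def mink_sym[of q p] mink_sym[of p "hrefl e p"])
  ultimately show ?thesis
    unfolding regular_square_def using pq t f refl_in_hyp3 by blast
qed

lemma third_axisE:
  fixes i j :: 4
  assumes "i \<in> {2,3,4}" "j \<in> {2,3,4}" "i \<noteq> j"
  obtains k where "{2,3,4} = {i, j, k}" "k \<noteq> i" "k \<noteq> j"
proof -
  have "i = 2 \<or> i = 3 \<or> i = 4" "j = 2 \<or> j = 3 \<or> j = 4"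
    using assms(1,2) by simp_all
  then show ?thesis
    using assms(3) that[of 2] that[of 3] that[of 4] by (elim disjE) (simp_all add: insert_commute)
qed

lemma mink_eq_axes:
  assumes "{2,3,4} = {i, j, k}" "i \<noteq> j" "i \<noteq> k" "j \<noteq> k"
  shows "mink x y = - x$1 * y$1 + x$i * y$i + x$j * y$j + x$k * y$k"
  unfolding mink_eq_sum assms(1) using assms(2-4) by simp

lemma cube_vertex_nth:
  "cube_vertex r sg $ l = (if l = 1 then cosh r else sinh r / sqrt 3 * sg l)"
  using exhaust_4[of l] by (auto simp: cube_vertex_def axis_def)

lemma face_normal_nth:
  assumes "i \<noteq> 1"
  shows "face_normal a i s $ l = (if l = 1 then sinh a else if l = i then s * cosh a else 0)"
  using assms by (auto simp: face_normal_def axis_def)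

lemma face_index_iff: "(i, s) \<in> face_index \<longleftrightarrow> (i = 2 \<or> i = 3 \<or> i = 4) \<and> (s = -1 \<or> s = 1)"
  by (auto simp: face_index_def)

lemma signs_iff: "sg \<in> signs \<longleftrightarrow> (\<forall>l\<in>{2,3,4}. sg l = -1 \<or> sg l = 1)"
  by (auto simp: signs_def)

lemma spacelike_unit_face_normal:
  assumes "(i, s) \<in> face_index"
  shows "spacelike_unit (face_normal a i s)"
proof -
  have "- (sinh a)\<^sup>2 + (s * cosh a)\<^sup>2 = 1"
    using assms cosh_square_eq[of a] by (auto simp: face_index_iff power_mult_distrib)
  then show ?thesis
    using assms by (auto simp: face_index_iff spacelike_unit_def mink_eq_sum face_normal_nth power2_eq_square)
qed

lemma mink_face_normal_face_normal:
  assumes "(i, s) \<in> face_index" "(j, t) \<in> face_index" "i \<noteq> j"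
  shows "mink (face_normal a i s) (face_normal a j t) = - (sinh a)\<^sup>2"
  using assms by (auto simp: face_index_iff mink_eq_sum face_normal_nth power2_eq_square)

lemma cube_dihedral_if_sinh_square:
  assumes "0 < \<theta>" "\<theta> < pi" "(sinh a)\<^sup>2 = cos \<theta>"
  shows "cube_dihedral a \<theta>"
proof -
  have "\<bar>cos \<theta>\<bar> < 1"
    using assms(1,2) cos_monotone_0_pi[of 0 \<theta>] cos_monotone_0_pi[of \<theta> pi] by auto
  then show ?thesis
    using assms by (auto simp: cube_dihedral_def planes_intersect_def dihedral_angle_def
        mink_face_normal_face_normal arccos_cos)
qed

lemma cube_vertex_in_hyp3:
  assumes "sg \<in> signs"
  shows "cube_vertex r sg \<in> hyp3"
proof -
  have "sg 2 * sg 2 = 1" "sg 3 * sg 3 = 1" "sg 4 * sg 4 = 1"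
    using assms by (auto simp: signs_iff)
  moreover have "mink (cube_vertex r sg) (cube_vertex r sg)
      = - (cosh r)\<^sup>2 + (sinh r)\<^sup>2 / 3 * (sg 2 * sg 2 + sg 3 * sg 3 + sg 4 * sg 4)"
    by (simp add: mink_eq_sum cube_vertex_nth power2_eq_square algebra_simps)
  ultimately show ?thesis
    by (simp add: hyp3_def cube_vertex_nth cosh_square_eq)
qed

lemma mink_cube_vertex_face_normal:
  assumes "(i, s) \<in> face_index"
  shows "mink (cube_vertex r sg) (face_normal a i s)
    = s * sg i * cosh a * (sinh r / sqrt 3) - cosh r * sinh a"
  using assms by (auto simp: face_index_iff mink_eq_sum cube_vertex_nth face_normal_nth)

lemma cube_adjacentE:
  assumes "sg \<in> signs" "tg \<in> signs" "cube_adjacent sg tg"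
  obtains j where "j \<in> {2,3,4}" "tg j = - sg j" "\<And>l. l \<in> {2,3,4} \<Longrightarrow> l \<noteq> j \<Longrightarrow> tg l = sg l"
proof -
  obtain j where J: "{l \<in> {2,3,4}. sg l \<noteq> tg l} = {j}"
    using assms(3) unfolding cube_adjacent_def by (rule card_1_singletonE)
  then have "j \<in> {l \<in> {2,3,4}. sg l \<noteq> tg l}"
    by simp
  then have j: "j \<in> {2,3,4}" "sg j \<noteq> tg j"
    by simp_all
  have agree: "tg l = sg l" if "l \<in> {2,3,4}" "l \<noteq> j" for l
  proof (rule ccontr)
    assume "tg l \<noteq> sg l"
    then have "l \<in> {l \<in> {2,3,4}. sg l \<noteq> tg l}"
      using that(1) by simp
    then have "l \<in> {j}"
      unfolding J .
    then show False
      using that(2) by simp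
  qed
  have "sg j = -1 \<or> sg j = 1" "tg j = -1 \<or> tg j = 1"
    using assms(1,2) j(1) unfolding signs_iff by blast+
  then have "tg j = - sg j"
    using j(2) by auto
  with j(1) show ?thesis
    using agree by (rule that)
qed

lemma mink_adjacent_cube_vertices:
  assumes "sg \<in> signs" "tg \<in> signs" "cube_adjacent sg tg"
  shows "mink (cube_vertex r sg) (cube_vertex r tg) = - (1 + 2 * (sinh r / sqrt 3)\<^sup>2)"
proof -
  obtain j where j: "j \<in> {2,3,4}" "tg j = - sg j" "\<And>l. l \<in> {2,3,4} \<Longrightarrow> l \<noteq> j \<Longrightarrow> tg l = sg l"
    using cube_adjacentE[OF assms] by metis
  have "sg l * tg l = (if l = j then -1 else 1)" if "l \<in> {2,3,4}" for l
  proof -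
    have "sg l = -1 \<or> sg l = 1"
      using assms(1) that unfolding signs_iff by blast
    then show ?thesis
      using j(2) j(3)[OF that] by auto
  qed
  then have "(\<Sum>l\<in>{2,3,4}. sg l * tg l) = 1"
    using j(1) by auto
  moreover have "mink (cube_vertex r sg) (cube_vertex r tg)
      = - (cosh r)\<^sup>2 + (sinh r / sqrt 3)\<^sup>2 * (\<Sum>l\<in>{2,3,4}. sg l * tg l)"
    by (simp add: mink_eq_sum cube_vertex_nth power2_eq_square algebra_simps)
  ultimately show ?thesis
    by (simp add: cosh_square_eq power_divide)
qed

definition prism_radius :: "real \<Rightarrow> real \<Rightarrow> bool" where
  "prism_radius a r \<longleftrightarrow> sinh r / sqrt 3 * (1 + cosh a) = cosh r * sinh a"

lemma prism_radius_exists: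
  assumes "0 < sinh a" "sinh a < 1"
  obtains r where "r > 0" "prism_radius a r"
proof -
  define T where "T = sqrt 3 * sinh a / (1 + cosh a)"
  have "sqrt 3 * sinh a < sqrt 3"
    using assms(2) by simp
  also have "sqrt 3 < 2"
    by (rule real_less_lsqrt) simp_all
  also have "2 \<le> 1 + cosh a"
    using cosh_real_ge_1[of a] by simp
  finally have "sqrt 3 * sinh a < 1 + cosh a" .
  moreover have "0 < 1 + cosh a"
    using cosh_real_pos[of a] by linarith
  ultimately have T: "0 < T" "T < 1" and "1 + cosh a \<noteq> 0"
    unfolding T_def using assms(1) by (simp_all add: divide_pos_pos pos_divide_less_eq)
  define r where "r = artanh T"
  have tanh_r: "tanh r = T"
    using T by (simp add: r_def tanh_artanh_real)
  have "sinh r / sqrt 3 * (1 + cosh a) = tanh r * (1 + cosh a) / sqrt 3 * cosh r"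
    by (simp add: tanh_def)
  also have "\<dots> = cosh r * sinh a"
    using \<open>1 + cosh a \<noteq> 0\<close> by (simp add: tanh_r T_def)
  finally have "prism_radius a r"
    unfolding prism_radius_def .
  moreover have "r > 0"
    using T(1) tanh_r tanh_real_pos_iff by metis
  ultimately show ?thesis
    using that by blast
qed

lemma mink_facing_vertex_face_normal:
  assumes "(i, s) \<in> face_index" "sg i = s" "prism_radius a r"
  shows "mink (cube_vertex r sg) (face_normal a i s) = - (sinh r / sqrt 3)"
proof -
  define t where "t = sinh r / sqrt 3"
  have "s * s = 1"
    using assms(1) by (auto simp: face_index_iff)
  then have "mink (cube_vertex r sg) (face_normal a i s) = cosh a * t - t * (1 + cosh a)"
    using assms by (simp add: mink_cube_vertex_face_normal prism_radius_def flip: t_def)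
  then show ?thesis
    by (simp add: algebra_simps flip: t_def)
qed

lemma Q_inside_P_if_prism_radius:
  assumes "sinh a > 0" "r > 0" "prism_radius a r"
  shows "Q_inside_P a r"
  unfolding Q_inside_P_def
proof (intro ballI, clarify)
  fix sg i s
  assume sg: "sg \<in> signs" and face: "(i, s) \<in> face_index"
  have "sg i = -1 \<or> sg i = 1" "s = -1 \<or> s = 1"
    using sg face unfolding signs_iff face_index_iff by blast+
  then consider "sg i = s" | "s * sg i = -1"
    by fastforce
  then show "mink (cube_vertex r sg) (face_normal a i s) < 0"
  proof cases
    case 1
    then show ?thesis
      using assms face by (simp add: mink_facing_vertex_face_normal)
  next
    case 2
    have "0 < cosh a * (sinh r / sqrt 3)" "0 < cosh r * sinh a"
      using assms(1,2) by simp_all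
    then show ?thesis
      using 2 face by (simp add: mink_cube_vertex_face_normal)
  qed
qed

lemma lateral_plane_exists:
  assumes face: "(i, s) \<in> face_index" and k: "k \<in> {2,3,4}" "k \<noteq> i"
    and \<kappa>: "\<kappa> = -1 \<or> \<kappa> = 1" and "prism_radius a r"
  obtains f where "spacelike_unit f" "mink (face_normal a i s) f = 0"
    "\<And>sg. sg i = s \<Longrightarrow> sg k = \<kappa> \<Longrightarrow> mink (cube_vertex r sg) f = 0"
proof -
  have i: "i \<in> {2,3,4}" and s: "s * s = 1" and \<kappa>\<kappa>: "\<kappa> * \<kappa> = 1"
    using face \<kappa> by (auto simp: face_index_iff)
  obtain j where j: "{2,3,4} = {i, k, j}" "j \<noteq> i" "j \<noteq> k"
    using third_axisE[OF i k(1) k(2)[symmetric]] .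
  have "j \<in> {2,3,4}"
    unfolding j(1) by simp
  then have ne1: "i \<noteq> 1" "j \<noteq> 1" "k \<noteq> 1"
    using i k(1) by auto
  note mink_ikj = mink_eq_axes[OF j(1) k(2)[symmetric] j(2)[symmetric] j(3)[symmetric]]
  define t where "t = sinh r / sqrt 3"
  have rel: "t * (1 + cosh a) = cosh r * sinh a"
    using \<open>prism_radius a r\<close> by (simp add: prism_radius_def t_def)
  have cosh_sq: "(cosh a)\<^sup>2 = 1 + (sinh a)\<^sup>2"
    by (simp add: cosh_square_eq)
  \<comment> \<open>orthogonal to the face normal and to the edge direction axis j; the coefficient of
    axis k is then forced by orthogonality to the vertices of the edge\<close>
  define g :: "real^4" where "g = (sinh a * cosh a) *\<^sub>R axis 1 1
    + (s * (sinh a)\<^sup>2) *\<^sub>R axis i 1 + ((1 + cosh a) * \<kappa>) *\<^sub>R axis k 1"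
  have g_nth: "g $ 1 = sinh a * cosh a" "g $ i = s * (sinh a)\<^sup>2" "g $ j = 0"
      "g $ k = (1 + cosh a) * \<kappa>"
    using ne1 k(2) j(2,3) by (simp_all add: g_def axis_def)
  have "mink g g = 2 * (1 + cosh a)"
    using s \<kappa>\<kappa> cosh_sq by (simp add: mink_ikj g_nth power2_eq_square) algebra
  moreover have "0 < 2 * (1 + cosh a)"
    using cosh_real_pos[of a] by (simp add: add_pos_pos)
  ultimately have g_pos: "mink g g > 0"
    by simp
  have "mink (face_normal a i s) g = 0"
    using s ne1 k(2) j(2,3) by (simp add: mink_ikj g_nth face_normal_nth power2_eq_square)
  moreover have "mink (cube_vertex r sg) g = 0" if "sg i = s" "sg k = \<kappa>" for sg
  proof -
    have "mink (cube_vertex r sg) g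
        = t * (s * s) * (sinh a)\<^sup>2 - cosh r * sinh a * cosh a + t * (\<kappa> * \<kappa>) * (1 + cosh a)"
      using that ne1 by (simp add: mink_ikj g_nth cube_vertex_nth algebra_simps flip: t_def)
    also have "\<dots> = cosh a * (t * (1 + cosh a) - cosh r * sinh a)"
      using s \<kappa>\<kappa> cosh_sq by algebra
    also have "\<dots> = 0"
      using rel by simp
    finally show ?thesis .
  qed
  moreover have "spacelike_unit ((1 / sqrt (mink g g)) *\<^sub>R g)"
    using g_pos by (simp add: spacelike_unit_def mink_scaleR_left mink_scaleR_right)
  ultimately show ?thesis
    using that[of "(1 / sqrt (mink g g)) *\<^sub>R g"] by (simp add: mink_scaleR_right)
qed

lemma lateral_face_regular_square:
  assumes "sinh a > 0" "r > 0" and rel: "prism_radius a r"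
    and face: "(i, s) \<in> face_index" and sg: "sg \<in> signs" "sg i = s"
    and tg: "tg \<in> signs" "tg i = s" and adj: "cube_adjacent sg tg"
  shows "regular_square (cube_vertex r sg) (cube_vertex r tg)
    (hrefl (face_normal a i s) (cube_vertex r tg)) (hrefl (face_normal a i s) (cube_vertex r sg))"
proof -
  obtain j where j: "j \<in> {2,3,4}" "tg j = - sg j" "\<And>l. l \<in> {2,3,4} \<Longrightarrow> l \<noteq> j \<Longrightarrow> tg l = sg l"
    using cube_adjacentE[OF sg(1) tg(1) adj] by metis
  have i: "i \<in> {2,3,4}" and i_ne_1: "i \<noteq> 1"
    using face by (auto simp: face_index_iff)
  have "sg j \<noteq> 0"
    using sg(1) j(1) unfolding signs_iff by force
  then have "i \<noteq> j"
    using sg(2) tg(2) j(2) by force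
  then obtain k where k: "{2,3,4} = {i, j, k}" "k \<noteq> i" "k \<noteq> j"
    using third_axisE[OF i j(1)] by blast
  have k_mem: "k \<in> {2,3,4}"
    unfolding k(1) by simp
  have "sg k = -1 \<or> sg k = 1"
    using sg(1) k_mem unfolding signs_iff by blast
  then obtain f where f: "spacelike_unit f" "mink (face_normal a i s) f = 0"
    "\<And>ug. ug i = s \<Longrightarrow> ug k = sg k \<Longrightarrow> mink (cube_vertex r ug) f = 0"
    using lateral_plane_exists[OF face k_mem k(2) _ rel] by blast
  have "tg k = sg k"
    using j(3) k_mem k(3) .
  have t_pos: "sinh r / sqrt 3 > 0"
    using assms(2) by simp
  have "cube_vertex r sg $ j \<noteq> cube_vertex r tg $ j"
    using j(1,2) t_pos \<open>sg j \<noteq> 0\<close> by (auto simp: cube_vertex_nth)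
  then have "cube_vertex r sg \<noteq> cube_vertex r tg"
    by metis
  moreover have "face_normal a i s $ 1 \<ge> 0"
    using assms(1) i_ne_1 by (simp add: face_normal_nth)
  ultimately show ?thesis
    using regular_square_reflected_edge[OF spacelike_unit_face_normal[OF face]]
      cube_vertex_in_hyp3[OF sg(1)] cube_vertex_in_hyp3[OF tg(1)]
      mink_adjacent_cube_vertices[OF sg(1) tg(1) adj] t_pos
      mink_facing_vertex_face_normal[where sg = sg, OF face sg(2) rel]
      mink_facing_vertex_face_normal[where sg = tg, OF face tg(2) rel]
      f \<open>tg k = sg k\<close> sg(2) tg(2) by simp
qed

theorem mainTheorem3:
  fixes n :: nat
  assumes "n \<ge> 5"
  shows "\<exists>a>0. cube_dihedral a (2 * pi / real n) \<and>
           (\<exists>r>0. Q_inside_P a r \<and> prism_condition a r)"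
proof -
  define \<theta> where "\<theta> = 2 * pi / real n"
  have "0 < \<theta>" "\<theta> \<le> 2 * pi / 5"
    using assms divide_left_mono[of 5 "real n" "2 * pi"] by (simp_all add: \<theta>_def)
  then have \<theta>: "0 < \<theta>" "\<theta> < pi / 2"
    using pi_gt_zero by linarith+
  then have cos_\<theta>: "0 < cos \<theta>" "cos \<theta> < 1"
    using cos_gt_zero cos_monotone_0_pi[of 0 \<theta>] by auto
  define a where "a = arsinh (sqrt (cos \<theta>))"
  have sinh_a: "0 < sinh a" "sinh a < 1" "(sinh a)\<^sup>2 = cos \<theta>"
    using cos_\<theta> by (simp_all add: a_def real_sqrt_lt_1_iff)
  then have "a > 0" "cube_dihedral a \<theta>"
    using \<theta> by (simp_all add: cube_dihedral_if_sinh_square)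
  obtain r where r: "r > 0" "prism_radius a r"
    using prism_radius_exists[OF sinh_a(1,2)] .
  have "Q_inside_P a r"
    using Q_inside_P_if_prism_radius[OF sinh_a(1) r] .
  moreover have "prism_condition a r"
    unfolding prism_condition_def using lateral_face_regular_square[OF sinh_a(1) r] by blast
  ultimately show ?thesis
    using \<open>a > 0\<close> \<open>cube_dihedral a \<theta>\<close> r(1) unfolding \<theta>_def by blast
qed

end
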